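(* Identify the tangent space of $\mathbb OP^2$ at $P_0=[1,0,0]$ with $\mathbb O^2$ via the chart $[1,u,v]\mapsto(u,v)$, a pair $(a,b)$ corresponding to the tangent vector with $du=a$, $dv=b$. Then the Riemann curvature tensor of $(\mathbb OP^2,g)$ at $P_0$ is $$\begin{aligned}R\big((a,b),(c,d),(e,f),(g,h)\big)=&\,4\langle a,e\rangle\langle c,g\rangle-4\langle c,e\rangle\langle a,g\rangle+4\langle b,f\rangle\langle d,h\rangle-4\langle d,f\rangle\langle b,h\rangle\\&-\langle e\bar d,g\bar b\rangle+\langle e\bar b,g\bar d\rangle-\langle c\bar f,a\bar h\rangle+\langle a\bar f,c\bar h\rangle-\langle a\bar d-c\bar b,\ g\bar f-e\bar h\rangle.\end{aligned}$$
   Context: Octonions: $\mathbb O=\mathbb H\oplus\mathbb H$ with product $(q_1,q_2)(p_1,p_2)=(q_1p_1-\bar p_2q_2,\ p_2q_1+q_2\bar p_1)$, conjugation $\overline{(q_1,q_2)}=(\bar q_1,-q_2)$, $\langle a,b\rangle=\mathrm{Re}(a\bar b)$, $|a|^2=\langle a,a\rangle$. $\mathbb OP^2=\mathcal U/_\sim$ with $\mathcal U=(\{1\}\times\mathbb O^2)\cup(\mathbb O\times\{1\}\times\mathbb O)\cup(\mathbb O^2\times\{1\})$ and $[a,b,c]\sim[d,e,f]$ iff $(a,b,c)=(d\lambda,e\lambda,f\lambda)$ for some $\lambda\ne0$; charts $[1,u,v]\mapsto(u,v)$, $[u,1,v]\mapsto(u,v)$, $[u,v,1]\mapsto(u,v)$,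 and metric $g$ given on each chart, for tangent vector $(du,dv)=(\xi,\eta)$, by $ds^2=\frac{|\xi|^2(1+|v|^2)+|\eta|^2(1+|u|^2)-2\mathrm{Re}[(u\bar v)(\eta\bar\xi)]}{(1+|u|^2+|v|^2)^2}$. Curvature sign convention: in coordinates in which the first derivatives of the metric vanish at the point, $R_{\alpha\beta\gamma\delta}=\tfrac12\big[\partial_\alpha\partial_\delta g_{\beta\gamma}+\partial_\beta\partial_\gamma g_{\alpha\delta}-\partial_\beta\partial_\delta g_{\alpha\gamma}-\partial_\alpha\partial_\gamma g_{\beta\delta}\big]$ (so the sectional curvature of an orthonormal pair $x,y$ is $R(x,y,x,y)$). *)

theory Defs
  imports "HOL-Analysis.Analysis"
begin

text \<open>Quaternions as real 4-tuples (a,b,c,d) = a + b i + c j + d k;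
  octonions as pairs of quaternions (Cayley--Dickson), with the product of the paper.\<close>

type_synonym quat = "real \<times> real \<times> real \<times> real"
type_synonym oct = "quat \<times> quat"

fun qmult :: "quat \<Rightarrow> quat \<Rightarrow> quat" where
  "qmult (a1, b1, c1, d1) (a2, b2, c2, d2) =
     (a1*a2 - b1*b2 - c1*c2 - d1*d2,
      a1*b2 + b1*a2 + c1*d2 - d1*c2,
      a1*c2 - b1*d2 + c1*a2 + d1*b2,
      a1*d2 + b1*c2 - c1*b2 + d1*a2)"

fun qcnj :: "quat \<Rightarrow> quat" where
  "qcnj (a, b, c, d) = (a, -b, -c, -d)"

fun omult :: "oct \<Rightarrow> oct \<Rightarrow> oct" where
  "omult (q1, q2) (p1, p2) =
     (qmult q1 p1 - qmult (qcnj p2) q2, qmult p2 q1 + qmult q2 (qcnj p1))"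

fun ocnj :: "oct \<Rightarrow> oct" where
  "ocnj (q1, q2) = (qcnj q1, - q2)"

definition oRe :: "oct \<Rightarrow> real" where
  "oRe x = fst (fst x)"

definition oinner :: "oct \<Rightarrow> oct \<Rightarrow> real" where
  "oinner a b = oRe (omult a (ocnj b))"

definition onorm2 :: "oct \<Rightarrow> real" where
  "onorm2 a = oinner a a"

text \<open>The line element of the metric in the chart [1,u,v] \<mapsto> (u,v), at the point (u,v),
  evaluated on the tangent vector (du,dv) = (\<xi>,\<eta>).\<close>
definition ds2 :: "oct \<times> oct \<Rightarrow> oct \<times> oct \<Rightarrow> real" where
  "ds2 p X = (let u = fst p; v = snd p; \<xi> = fst X; \<eta> = snd X in
     (onorm2 \<xi> * (1 + onorm2 v) + onorm2 \<eta> * (1 + onorm2 u)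
       - 2 * oRe (omult (omult u (ocnj v)) (omult \<eta> (ocnj \<xi>))))
     / (1 + onorm2 u + onorm2 v)^2)"

definition gmet :: "oct \<times> oct \<Rightarrow> oct \<times> oct \<Rightarrow> oct \<times> oct \<Rightarrow> real" where
  "gmet p X Y = (ds2 p (X + Y) - ds2 p (X - Y)) / 4"

definition D2 :: "(oct \<times> oct \<Rightarrow> real) \<Rightarrow> oct \<times> oct \<Rightarrow> oct \<times> oct \<Rightarrow> oct \<times> oct \<Rightarrow> real" where
  "D2 f p X W = deriv (\<lambda>s. deriv (\<lambda>t. f (p + s *\<^sub>R X + t *\<^sub>R W)) 0) 0"

text \<open>Curvature by the paper's convention, valid in coordinates where the first derivatives
  of the metric vanish at p:
  R_{\<alpha>\<beta>\<gamma>\<delta>} = 1/2 [\<partial>_\<alpha>\<partial>_\<delta> g_{\<beta>\<gamma>} + \<partial>_\<beta>\<partial>_\<gamma> g_{\<alpha>\<delta>} - \<partial>_\<beta>\<partial>_\<delta> g_{\<alpha>\<gamma>} - \<partial>_\<alpha>\<partial>_\<gamma> g_{\<beta>\<delta>}].\<close>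
definition Rcurv :: "oct \<times> oct \<Rightarrow> oct \<times> oct \<Rightarrow> oct \<times> oct \<Rightarrow> oct \<times> oct \<Rightarrow> oct \<times> oct \<Rightarrow> real" where
  "Rcurv p X Y Z W = (1/2) *
     (D2 (\<lambda>q. gmet q Y Z) p X W + D2 (\<lambda>q. gmet q X W) p Y Z
      - D2 (\<lambda>q. gmet q X Z) p Y W - D2 (\<lambda>q. gmet q Y W) p X Z)"

end

theory Submission
  imports Defs
begin

text \<open>In the chart at P0 the metric has the form g_q(Y,Z) = (A + Q(q)) / (1 + |q|^2)^2 with
  A = g_0(Y,Z) and Q a quadratic form in q = (u,v). Hence its first derivatives vanish at 0,
  and its mixed second derivatives there are read off from the polarisations of Q and |q|^2.
  The curvature is then a combination of inner products of the octonion products p conj(q),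
  and the symmetries of these together with the polarised composition law
  p conj(q) . r conj(s) + p conj(s) . r conj(q) = 2 (p . r) (q . s)
  reduce it to the stated formula.\<close>

lemma oct_cases: "(\<And>a0 a1 a2 a3 a4 a5 a6 a7. x = ((a0,a1,a2,a3),(a4,a5,a6,a7)) \<Longrightarrow> P) \<Longrightarrow> P"
  by (metis prod.exhaust)

lemma oinner_eq_inner: "oinner x y = x \<bullet> y"
  by (cases x rule: oct_cases; cases y rule: oct_cases)
     (simp add: oinner_def oRe_def inner_prod_def algebra_simps)

lemma onorm2_eq_inner: "onorm2 x = x \<bullet> x"
  by (simp add: onorm2_def oinner_eq_inner)

lemma bounded_bilinear_omult: "bounded_bilinear omult"
  unfolding bilinear_conv_bounded_bilinear[symmetric] bilinear_def linear_iff
  by (auto elim!: oct_cases simp: algebra_simps)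

interpretation omult: bounded_bilinear omult
  by (rule bounded_bilinear_omult)

lemma ocnj_add: "ocnj (x + y) = ocnj x + ocnj y"
  by (cases x rule: oct_cases; cases y rule: oct_cases) simp

lemma ocnj_diff: "ocnj (x - y) = ocnj x - ocnj y"
  by (cases x rule: oct_cases; cases y rule: oct_cases) simp

lemma ocnj_scaleR: "ocnj (r *\<^sub>R x) = r *\<^sub>R ocnj x"
  by (cases x rule: oct_cases) simp

lemma ocnj_ocnj [simp]: "ocnj (ocnj x) = x"
  by (cases x rule: oct_cases) simp

lemma ocnj_omult: "ocnj (omult x y) = omult (ocnj y) (ocnj x)"
  by (cases x rule: oct_cases; cases y rule: oct_cases) (simp add: algebra_simps)

lemma inner_ocnj_ocnj [simp]: "ocnj x \<bullet> ocnj y = x \<bullet> y"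
  by (cases x rule: oct_cases; cases y rule: oct_cases) (simp add: inner_prod_def)

lemma inner_eq_oRe: "x \<bullet> y = oRe (omult x (ocnj y))"
  by (simp add: oinner_def flip: oinner_eq_inner)

lemma oRe_omult_eq_inner: "oRe (omult x y) = x \<bullet> ocnj y"
  by (simp add: inner_eq_oRe)

lemma oRe_add: "oRe (x + y) = oRe x + oRe y"
  by (simp add: oRe_def)

lemma oRe_scaleR: "oRe (r *\<^sub>R x) = r * oRe x"
  by (simp add: oRe_def)

lemma oRe_omult_assoc: "oRe (omult (omult x y) z) = oRe (omult x (omult y z))"
  by (cases x rule: oct_cases; cases y rule: oct_cases; cases z rule: oct_cases)
     (simp add: oRe_def algebra_simps)

lemma omult_ocnj_polar: "omult (omult p (ocnj q)) r + omult (omult p (ocnj r)) q = (2 * (q \<bullet> r)) *\<^sub>R p"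
  by (cases p rule: oct_cases; cases q rule: oct_cases; cases r rule: oct_cases)
     (simp add: inner_prod_def algebra_simps)

text \<open>The polarised form of the composition law |xy| = |x| |y|.\<close>

lemma inner_omult_ocnj_polar:
  "omult p (ocnj q) \<bullet> omult r (ocnj s) + omult p (ocnj s) \<bullet> omult r (ocnj q) = 2 * (p \<bullet> r) * (q \<bullet> s)"
proof -
  have "omult p (ocnj q) \<bullet> omult r (ocnj s) + omult p (ocnj s) \<bullet> omult r (ocnj q)
      = oRe (omult (omult p (ocnj q)) (omult s (ocnj r))) + oRe (omult (omult p (ocnj s)) (omult q (ocnj r)))"
    by (simp add: inner_eq_oRe ocnj_omult)
  also have "\<dots> = oRe (omult (omult (omult p (ocnj q)) s + omult (omult p (ocnj s)) q) (ocnj r))"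
    by (simp add: oRe_omult_assoc omult.add_left oRe_add)
  also have "\<dots> = 2 * (p \<bullet> r) * (q \<bullet> s)"
    by (simp add: omult_ocnj_polar omult.scaleR_left oRe_scaleR oRe_omult_eq_inner)
  finally show ?thesis .
qed

lemma inner_omult_ocnj_cnj: "omult q (ocnj p) \<bullet> omult s (ocnj r) = omult p (ocnj q) \<bullet> omult r (ocnj s)"
  by (metis inner_ocnj_ocnj ocnj_omult ocnj_ocnj)

lemma inner_omult_ocnj_rev: "omult s (ocnj r) \<bullet> omult q (ocnj p) = omult p (ocnj q) \<bullet> omult r (ocnj s)"
  by (metis inner_commute inner_omult_ocnj_cnj)

lemma bounded_bilinear_inner_omult_ocnj: "bounded_bilinear (\<lambda>u v. omult u (ocnj v) \<bullet> k)"
  unfolding bilinear_conv_bounded_bilinear[symmetric] bilinear_def linear_iff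
  by (simp add: omult.add_left omult.add_right omult.scaleR_left omult.scaleR_right
      ocnj_add ocnj_scaleR inner_add_left)

lemma ds2_eq:
  "ds2 (u, v) (x1, x2) =
     (x1 \<bullet> x1 * (1 + v \<bullet> v) + x2 \<bullet> x2 * (1 + u \<bullet> u) - 2 * (omult u (ocnj v) \<bullet> omult x1 (ocnj x2)))
     / (1 + u \<bullet> u + v \<bullet> v)^2"
  by (simp add: ds2_def onorm2_eq_inner oRe_omult_eq_inner ocnj_omult)

lemma gmet_eq:
  "gmet (u, v) (y1, y2) (z1, z2) =
     ((y1 \<bullet> z1) * (1 + v \<bullet> v) + (y2 \<bullet> z2) * (1 + u \<bullet> u)
       - omult u (ocnj v) \<bullet> (omult y1 (ocnj z2) + omult z1 (ocnj y2)))
     / (1 + u \<bullet> u + v \<bullet> v)^2"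
proof -
  have "ds2 (u, v) (y1 + z1, y2 + z2) - ds2 (u, v) (y1 - z1, y2 - z2) =
    4 * ((y1 \<bullet> z1) * (1 + v \<bullet> v) + (y2 \<bullet> z2) * (1 + u \<bullet> u)
       - omult u (ocnj v) \<bullet> (omult y1 (ocnj z2) + omult z1 (ocnj y2)))
     / (1 + u \<bullet> u + v \<bullet> v)^2"
    unfolding ds2_eq diff_divide_distrib[symmetric]
    by (simp add: omult.add_left omult.add_right omult.diff_left omult.diff_right
        ocnj_add ocnj_diff inner_commute algebra_simps)
  moreover have "0 < 1 + u \<bullet> u + v \<bullet> v"
    by (simp add: add_pos_nonneg)
  ultimately show ?thesis
    by (simp add: gmet_def) (simp add: field_simps)
qed

lemma bounded_bilinear_has_derivative_zero:
  assumes "bounded_bilinear B" "bounded_linear f" "bounded_linear g"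
  shows "((\<lambda>x. B (f x) (g x)) has_derivative (\<lambda>_. 0)) (at 0)"
proof -
  interpret B: bounded_bilinear B by (fact assms(1))
  have "f 0 = 0" "g 0 = 0"
    using assms(2,3) by (simp_all add: linear_simps)
  then show ?thesis
    using B.FDERIV[where x=0, OF bounded_linear_imp_has_derivative[OF assms(2)]
        bounded_linear_imp_has_derivative[OF assms(3)]]
    by (simp add: B.zero_left B.zero_right)
qed

lemma gmet_has_derivative_zero: "((\<lambda>q. gmet q Y Z) has_derivative (\<lambda>_. 0)) (at 0)"
proof -
  obtain y1 y2 z1 z2 where YZ: "Y = (y1, y2)" "Z = (z1, z2)"
    by (metis surj_pair)
  define k where "k = omult y1 (ocnj z2) + omult z1 (ocnj y2)"
  define Q where "Q q = (y1 \<bullet> z1) * (snd q \<bullet> snd q) + (y2 \<bullet> z2) * (fst q \<bullet> fst q)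
       - omult (fst q) (ocnj (snd q)) \<bullet> k" for q :: "oct \<times> oct"
  define P where "P q = fst q \<bullet> fst q + snd q \<bullet> snd q" for q :: "oct \<times> oct"
  have gmet_QP: "(\<lambda>q. gmet q Y Z) = (\<lambda>q. (y1 \<bullet> z1 + y2 \<bullet> z2 + Q q) / (1 + P q)^2)"
  proof
    fix q :: "oct \<times> oct"
    show "gmet q Y Z = (y1 \<bullet> z1 + y2 \<bullet> z2 + Q q) / (1 + P q)^2"
      by (cases q) (simp add: YZ gmet_eq Q_def P_def k_def algebra_simps)
  qed
  have norm_fst: "((\<lambda>q. fst q \<bullet> fst q) has_derivative (\<lambda>_. 0)) (at (0 :: oct \<times> oct))"
    and norm_snd: "((\<lambda>q. snd q \<bullet> snd q) has_derivative (\<lambda>_. 0)) (at (0 :: oct \<times> oct))"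
    and cross: "((\<lambda>q. omult (fst q) (ocnj (snd q)) \<bullet> k) has_derivative (\<lambda>_. 0)) (at (0 :: oct \<times> oct))"
    by (rule bounded_bilinear_has_derivative_zero[OF _ bounded_linear_fst bounded_linear_fst]
        bounded_bilinear_has_derivative_zero[OF _ bounded_linear_snd bounded_linear_snd]
        bounded_bilinear_has_derivative_zero[OF _ bounded_linear_fst bounded_linear_snd],
        simp_all add: bounded_bilinear_inner bounded_bilinear_inner_omult_ocnj)+
  have "(Q has_derivative (\<lambda>_. (y1 \<bullet> z1) * 0 + (y2 \<bullet> z2) * 0 - 0)) (at 0)"
    unfolding Q_def by (intro has_derivative_diff has_derivative_add has_derivative_mult_right norm_fst norm_snd cross)
  moreover have "(P has_derivative (\<lambda>_. 0 + 0)) (at 0)"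
    unfolding P_def by (intro has_derivative_add norm_fst norm_snd)
  moreover have "P 0 = 0"
    by (simp add: P_def)
  ultimately show ?thesis
    unfolding gmet_QP by (auto intro!: derivative_eq_intros)
qed

lemma has_real_derivative_quadratic_quotient_at_0:
  fixes a b c e f k :: real
  assumes "e \<noteq> 0"
  shows "((\<lambda>t. (a + b * t + c * t^2) / (e + f * t + k * t^2)^2)
           has_real_derivative b / e^2 - 2 * a * f / e^3) (at 0)"
  using assms by (auto intro!: derivative_eq_intros simp: field_simps power2_eq_square power3_eq_cube)

lemma deriv_deriv_quadratic_quotient:
  fixes A n1 n2 n3 d1 d2 d3 :: real
  assumes "0 \<le> d1"
  shows "deriv (\<lambda>s. deriv (\<lambda>t. (A + s^2 * n1 + s * t * n2 + t^2 * n3)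
                                / (1 + s^2 * d1 + s * t * d2 + t^2 * d3)^2) 0) 0
         = n2 - 2 * A * d2"
proof -
  have inner: "deriv (\<lambda>t. (A + s^2 * n1 + s * t * n2 + t^2 * n3) / (1 + s^2 * d1 + s * t * d2 + t^2 * d3)^2) 0
      = s * n2 / (1 + s^2 * d1)^2 - 2 * (A + s^2 * n1) * (s * d2) / (1 + s^2 * d1)^3" for s
  proof (rule DERIV_imp_deriv)
    have "0 \<le> s^2 * d1"
      using assms by simp
    then have "1 + s^2 * d1 \<noteq> 0"
      by linarith
    from has_real_derivative_quadratic_quotient_at_0[OF this, of "A + s^2 * n1" "s * n2" n3 "s * d2" d3]
    show "((\<lambda>t. (A + s^2 * n1 + s * t * n2 + t^2 * n3) / (1 + s^2 * d1 + s * t * d2 + t^2 * d3)^2)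
        has_real_derivative s * n2 / (1 + s^2 * d1)^2 - 2 * (A + s^2 * n1) * (s * d2) / (1 + s^2 * d1)^3) (at 0)"
      by (simp add: algebra_simps)
  qed
  have "((\<lambda>s. s * n2 / (1 + s^2 * d1)^2 - 2 * (A + s^2 * n1) * (s * d2) / (1 + s^2 * d1)^3)
      has_real_derivative n2 - 2 * A * d2) (at 0)"
    using assms by (auto intro!: derivative_eq_intros simp: add_pos_nonneg)
  then show ?thesis
    unfolding inner by (rule DERIV_imp_deriv)
qed

lemma D2_gmet_at_0:
  "D2 (\<lambda>q. gmet q (y1, y2) (z1, z2)) 0 (x1, x2) (w1, w2) =
     2 * (y1 \<bullet> z1) * (x2 \<bullet> w2) + 2 * (y2 \<bullet> z2) * (x1 \<bullet> w1)
     - omult x1 (ocnj w2) \<bullet> (omult y1 (ocnj z2) + omult z1 (ocnj y2))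
     - omult w1 (ocnj x2) \<bullet> (omult y1 (ocnj z2) + omult z1 (ocnj y2))
     - 4 * (y1 \<bullet> z1 + y2 \<bullet> z2) * (x1 \<bullet> w1 + x2 \<bullet> w2)"
proof -
  define k where "k = omult y1 (ocnj z2) + omult z1 (ocnj y2)"
  define B where "B u v = omult u (ocnj v) \<bullet> k" for u v
  define A where "A = y1 \<bullet> z1 + y2 \<bullet> z2"
  define n1 where "n1 = (y1 \<bullet> z1) * (x2 \<bullet> x2) + (y2 \<bullet> z2) * (x1 \<bullet> x1) - B x1 x2"
  define n2 where "n2 = 2 * (y1 \<bullet> z1) * (x2 \<bullet> w2) + 2 * (y2 \<bullet> z2) * (x1 \<bullet> w1) - B x1 w2 - B w1 x2"
  define n3 where "n3 = (y1 \<bullet> z1) * (w2 \<bullet> w2) + (y2 \<bullet> z2) * (w1 \<bullet> w1) - B w1 w2"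
  define d2 where "d2 = 2 * (x1 \<bullet> w1 + x2 \<bullet> w2)"
  have "gmet (0 + s *\<^sub>R (x1, x2) + t *\<^sub>R (w1, w2)) (y1, y2) (z1, z2) =
      (A + s^2 * n1 + s * t * n2 + t^2 * n3)
      / (1 + s^2 * (x1 \<bullet> x1 + x2 \<bullet> x2) + s * t * d2 + t^2 * (w1 \<bullet> w1 + w2 \<bullet> w2))^2" for s t
    by (simp add: gmet_eq A_def n1_def n2_def n3_def d2_def B_def k_def omult.add_left omult.add_right
        omult.scaleR_left omult.scaleR_right ocnj_add ocnj_scaleR inner_commute power2_eq_square algebra_simps)
  then have "D2 (\<lambda>q. gmet q (y1, y2) (z1, z2)) 0 (x1, x2) (w1, w2) = n2 - 2 * A * d2"
    by (simp add: D2_def deriv_deriv_quadratic_quotient)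
  then show ?thesis
    by (simp add: n2_def A_def d2_def B_def k_def algebra_simps)
qed

text \<open>The three symmetry lemmas for products p conj(q) . r conj(s) are permutative, so simp's
  ordered rewriting turns each such product into a fixed representative of its orbit; after
  that, four instances of the polarised composition law make the identity linear.\<close>

lemma Rcurv_at_0:
  "Rcurv 0 (a, b) (c, d) (e, f) (g, h) =
        4 * oinner a e * oinner c g - 4 * oinner c e * oinner a g
      + 4 * oinner b f * oinner d h - 4 * oinner d f * oinner b h
      - oinner (omult e (ocnj d)) (omult g (ocnj b))
      + oinner (omult e (ocnj b)) (omult g (ocnj d))
      - oinner (omult c (ocnj f)) (omult a (ocnj h))
      + oinner (omult a (ocnj f)) (omult c (ocnj h))
      - oinner (omult a (ocnj d) - omult c (ocnj b)) (omult g (ocnj f) - omult e (ocnj h))"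
  using inner_omult_ocnj_polar[of a h e d] inner_omult_ocnj_polar[of a f g d]
    inner_omult_ocnj_polar[of b g f c] inner_omult_ocnj_polar[of b e h c]
  by (simp add: Rcurv_def D2_gmet_at_0 oinner_eq_inner
      inner_commute inner_omult_ocnj_cnj inner_omult_ocnj_rev algebra_simps)

theorem corollary5p4:
  fixes a b c d e f g h :: oct
  shows "(\<forall>Y Z. ((\<lambda>q. gmet q Y Z) has_derivative (\<lambda>_. 0)) (at 0))
    \<and> Rcurv 0 (a, b) (c, d) (e, f) (g, h) =
        4 * oinner a e * oinner c g - 4 * oinner c e * oinner a g
      + 4 * oinner b f * oinner d h - 4 * oinner d f * oinner b h
      - oinner (omult e (ocnj d)) (omult g (ocnj b))
      + oinner (omult e (ocnj b)) (omult g (ocnj d))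
      - oinner (omult c (ocnj f)) (omult a (ocnj h))
      + oinner (omult a (ocnj f)) (omult c (ocnj h))
      - oinner (omult a (ocnj d) - omult c (ocnj b)) (omult g (ocnj f) - omult e (ocnj h))"
  using gmet_has_derivative_zero Rcurv_at_0 by blast

end
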